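(* Let $0<\varepsilon<1$ and let $E^1=\{uv: \varepsilon w_v<w_u<w_v/\varepsilon\}$ (unordered pairs, $u=v$ allowed) and $N^1_u=\{v\in V: uv\in E^1\}$. Let $\mathcal C'$ be any clustering of $V$ that does not split any atom and such that for every $u\in V$ and every $C\in\mathcal C'$ with $K_u\subsetneq C$ we have $w(u,C)>\frac{|C|}2+\varepsilon w_u$. Then for every $C\in\mathcal C'$ and any $u,v\in C$ with $v\notin K_u$, $$\sum_{p\in N^1_u\cap N^1_v}w_{up}w_{vp}>\varepsilon(w_u+w_v).$$
   Context: A Correlation Clustering instance consists of a finite vertex set $V$ and a partition $E^+\uplus E^-=\binom V2$ of unordered pairs of distinct vertices into $+$edges and $-$edges. $\mathcal K$ is a partition of $V$ into atoms, and every pair of distinct vertices in a common atom is a $+$edge. For $u\in V$, $K_u$ is the atom containing $u$ and $k_u=|K_u|$. For $u,v\in V$ (possibly equal), $w_{uv}=\frac1{k_uk_v}\sum_{u'\in K_u,v'\in K_v}\mathbf 1[u'v'\text{ is a }+\text{edge or }u'=v']\in[0,1]$; for $V'\subseteq V$, $w(u,V')=\sum_{v\in V'}w_{uv}$, and $w_u=w(u,V)$. *)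

theory Defs
  imports Complex_Main "HOL-Library.Disjoint_Sets"
begin

text \<open>A Correlation Clustering instance: finite vertex set V, set Ep of +edges
(unordered pairs {u,v} of distinct vertices of V); all other pairs are -edges.\<close>

definition cc_instance :: "'a set \<Rightarrow> 'a set set \<Rightarrow> 'a set set \<Rightarrow> bool" where
  "cc_instance V Ep Katoms \<longleftrightarrow>
     finite V \<and>
     Ep \<subseteq> {{x, y} | x y. x \<in> V \<and> y \<in> V \<and> x \<noteq> y} \<and>
     partition_on V Katoms \<and>
     (\<forall>A\<in>Katoms. \<forall>x\<in>A. \<forall>y\<in>A. x \<noteq> y \<longrightarrow> {x, y} \<in> Ep)"

definition atom_of :: "'a set set \<Rightarrow> 'a \<Rightarrow> 'a set" where
  "atom_of Katoms u = (THE A. A \<in> Katoms \<and> u \<in> A)"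

definition wgt :: "'a set set \<Rightarrow> 'a set set \<Rightarrow> 'a \<Rightarrow> 'a \<Rightarrow> real" where
  "wgt Ep Katoms u v =
     (1 / (real (card (atom_of Katoms u)) * real (card (atom_of Katoms v)))) *
     (\<Sum>u'\<in>atom_of Katoms u. \<Sum>v'\<in>atom_of Katoms v.
        (if {u', v'} \<in> Ep \<or> u' = v' then 1 else 0))"

definition wset :: "'a set set \<Rightarrow> 'a set set \<Rightarrow> 'a \<Rightarrow> 'a set \<Rightarrow> real" where
  "wset Ep Katoms u V' = (\<Sum>v\<in>V'. wgt Ep Katoms u v)"

definition wdeg :: "'a set \<Rightarrow> 'a set set \<Rightarrow> 'a set set \<Rightarrow> 'a \<Rightarrow> real" where
  "wdeg V Ep Katoms u = wset Ep Katoms u V"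

definition N1 :: "real \<Rightarrow> 'a set \<Rightarrow> 'a set set \<Rightarrow> 'a set set \<Rightarrow> 'a \<Rightarrow> 'a set" where
  "N1 eps V Ep Katoms u = {v \<in> V. eps * wdeg V Ep Katoms v < wdeg V Ep Katoms u \<and>
                                   wdeg V Ep Katoms u < wdeg V Ep Katoms v / eps}"

end

theory Submission
  imports Defs
begin

text \<open>Since \<open>C\<close> contains vertices of two different atoms, no atom equals \<open>C\<close>, so the
  heaviness condition applies to every \<open>p \<in> C\<close>. Together with \<open>w(p,C) \<le> |C|\<close> and
  \<open>w(p,C) \<le> w_p\<close> it gives \<open>\<epsilon> w_p < |C|/2 < w_p\<close>; so all degrees in \<open>C\<close> are
  \<open>\<epsilon>\<close>-close and \<open>C \<subseteq> N\<^sup>1_u \<inter> N\<^sup>1_v\<close>. Finally \<open>a + b - 1 \<le> a b\<close> on \<open>[0,1]\<close> bounds the sum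
  over \<open>C\<close> of \<open>w_up w_vp\<close> from below by \<open>w(u,C) + w(v,C) - |C| > \<epsilon> (w_u + w_v)\<close>.\<close>

lemma atom_of_eq:
  assumes "partition_on V Katoms" and "A \<in> Katoms" and "x \<in> A"
  shows "atom_of Katoms x = A"
  unfolding atom_of_def
proof (rule the_equality)
  show "A \<in> Katoms \<and> x \<in> A" using assms by simp
next
  fix B assume "B \<in> Katoms \<and> x \<in> B"
  then show "B = A" using assms unfolding partition_on_def disjoint_def by blast
qed

lemma atom_of_in_partition:
  assumes "partition_on V Katoms" and "x \<in> V"
  shows "atom_of Katoms x \<in> Katoms" and "x \<in> atom_of Katoms x"
proof -
  obtain A where "A \<in> Katoms" "x \<in> A" using assms unfolding partition_on_def by blast
  then show "atom_of Katoms x \<in> Katoms" "x \<in> atom_of Katoms x"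
    using atom_of_eq[OF assms(1)] by simp_all
qed

lemma atom_of_subset_cluster:
  assumes atoms: "partition_on V Katoms" and clust: "partition_on V Cl"
    and nosplit: "\<forall>A\<in>Katoms. \<exists>C\<in>Cl. A \<subseteq> C"
    and C: "C \<in> Cl" and p: "p \<in> C"
  shows "atom_of Katoms p \<subseteq> C"
proof -
  have pV: "p \<in> V" using clust C p unfolding partition_on_def by auto
  obtain C' where C': "C' \<in> Cl" "atom_of Katoms p \<subseteq> C'"
    using nosplit atom_of_in_partition[OF atoms pV] by blast
  have "p \<in> C'" using C' atom_of_in_partition(2)[OF atoms pV] by auto
  then have "C' = C" using C' C p clust unfolding partition_on_def disjoint_def by blast
  with C' show ?thesis by simp
qed

lemma atom_of_psubset_cluster:
  assumes atoms: "partition_on V Katoms" and clust: "partition_on V Cl"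
    and nosplit: "\<forall>A\<in>Katoms. \<exists>C\<in>Cl. A \<subseteq> C"
    and C: "C \<in> Cl" and p: "p \<in> C"
    and u: "u \<in> C" and v: "v \<in> C" and vu: "v \<notin> atom_of Katoms u"
  shows "atom_of Katoms p \<subset> C"
proof -
  have sub: "atom_of Katoms p \<subseteq> C"
    using atom_of_subset_cluster[OF atoms clust nosplit C p] .
  have "atom_of Katoms p \<noteq> C"
  proof
    assume eq: "atom_of Katoms p = C"
    have "p \<in> V" using clust C p unfolding partition_on_def by auto
    then have "atom_of Katoms u = C"
      using eq u atom_of_eq[OF atoms] atom_of_in_partition(1)[OF atoms] by metis
    with v vu show False by simp
  qed
  with sub show ?thesis by blast
qed

lemma wgt_nonneg: "0 \<le> wgt Ep Katoms u v"
  unfolding wgt_def by (intro mult_nonneg_nonneg sum_nonneg) auto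

lemma wgt_le_one: "wgt Ep Katoms u v \<le> 1"
proof -
  \<comment> \<open>No hypotheses needed: an infinite atom has \<open>card = 0\<close>, making \<open>wgt\<close> zero.\<close>
  let ?a = "real (card (atom_of Katoms u))" and ?b = "real (card (atom_of Katoms v))"
  let ?S = "\<Sum>u'\<in>atom_of Katoms u. \<Sum>v'\<in>atom_of Katoms v.
              (if {u', v'} \<in> Ep \<or> u' = v' then 1 else 0::real)"
  have "?S \<le> (\<Sum>u'\<in>atom_of Katoms u. ?b * 1)"
    by (intro sum_mono sum_bounded_above) auto
  then have S: "?S \<le> ?a * ?b" by simp
  show ?thesis
  proof (cases "?a * ?b = 0")
    case False
    then have "?a * ?b > 0" by simp
    with S show ?thesis unfolding wgt_def by (simp add: field_simps)
  qed (auto simp: wgt_def)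
qed

lemma wset_le_card: "wset Ep Katoms u C \<le> real (card C)"
  unfolding wset_def using sum_bounded_above[of C "wgt Ep Katoms u" 1] by (simp add: wgt_le_one)

lemma wset_le_wdeg:
  assumes "finite V" and "C \<subseteq> V"
  shows "wset Ep Katoms u C \<le> wdeg V Ep Katoms u"
  unfolding wdeg_def wset_def using assms by (intro sum_mono2) (auto simp: wgt_nonneg)

lemma wdeg_nonneg: "0 \<le> wdeg V Ep Katoms u"
  unfolding wdeg_def wset_def by (intro sum_nonneg) (simp add: wgt_nonneg)

lemma heavy_degree_bounds:
  assumes "finite V" and "C \<subseteq> V" and "0 \<le> eps"
    and heavy: "wset Ep Katoms p C > real (card C) / 2 + eps * wdeg V Ep Katoms p"
  shows "eps * wdeg V Ep Katoms p < real (card C) / 2"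
    and "real (card C) / 2 < wdeg V Ep Katoms p"
proof -
  have "0 \<le> eps * wdeg V Ep Katoms p" using assms(3) by (simp add: wdeg_nonneg)
  then show "eps * wdeg V Ep Katoms p < real (card C) / 2"
    and "real (card C) / 2 < wdeg V Ep Katoms p"
    using heavy wset_le_card[of Ep Katoms p C] wset_le_wdeg[OF assms(1,2), of Ep Katoms p]
    by linarith+
qed

lemma N1_memI:
  assumes "p \<in> V" and "0 < eps"
    and "eps * wdeg V Ep Katoms p < c" "c < wdeg V Ep Katoms u"
    and "eps * wdeg V Ep Katoms u < c" "c < wdeg V Ep Katoms p"
  shows "p \<in> N1 eps V Ep Katoms u"
  unfolding N1_def using assms by (auto simp: less_divide_eq mult.commute)

lemma add_le_one_plus_mult:
  fixes a b :: real
  assumes "0 \<le> a" "a \<le> 1" "0 \<le> b" "b \<le> 1"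
  shows "a + b \<le> 1 + a * b"
proof -
  have "0 \<le> (1 - a) * (1 - b)" using assms by simp
  then show ?thesis by (simp add: algebra_simps)
qed

lemma wset_add_wset_le_card_plus_common:
  "wset Ep Katoms u C + wset Ep Katoms v C
     \<le> real (card C) + (\<Sum>p\<in>C. wgt Ep Katoms u p * wgt Ep Katoms v p)"
proof -
  have "wset Ep Katoms u C + wset Ep Katoms v C = (\<Sum>p\<in>C. wgt Ep Katoms u p + wgt Ep Katoms v p)"
    unfolding wset_def by (simp add: sum.distrib)
  also have "\<dots> \<le> (\<Sum>p\<in>C. 1 + wgt Ep Katoms u p * wgt Ep Katoms v p)"
    by (intro sum_mono add_le_one_plus_mult wgt_nonneg wgt_le_one)
  also have "\<dots> = real (card C) + (\<Sum>p\<in>C. wgt Ep Katoms u p * wgt Ep Katoms v p)"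
    by (simp add: sum.distrib)
  finally show ?thesis .
qed

theorem lemma11:
  fixes V :: "'a set" and Ep Katoms Cl :: "'a set set" and eps :: real
  assumes inst: "cc_instance V Ep Katoms"
    and eps: "0 < eps" "eps < 1"
    and clust: "partition_on V Cl"
    and nosplit: "\<forall>A\<in>Katoms. \<exists>C\<in>Cl. A \<subseteq> C"
    and heavy: "\<forall>u\<in>V. \<forall>C\<in>Cl. atom_of Katoms u \<subset> C \<longrightarrow>
                   wset Ep Katoms u C > real (card C) / 2 + eps * wdeg V Ep Katoms u"
    and C: "C \<in> Cl" and u: "u \<in> C" and v: "v \<in> C" and vu: "v \<notin> atom_of Katoms u"
  shows "(\<Sum>p\<in>N1 eps V Ep Katoms u \<inter> N1 eps V Ep Katoms v.
            wgt Ep Katoms u p * wgt Ep Katoms v p)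
         > eps * (wdeg V Ep Katoms u + wdeg V Ep Katoms v)"
proof -
  have atoms: "partition_on V Katoms" and fin: "finite V"
    using inst unfolding cc_instance_def by auto
  have CV: "C \<subseteq> V" using clust C unfolding partition_on_def by auto
  have heavyC: "wset Ep Katoms p C > real (card C) / 2 + eps * wdeg V Ep Katoms p"
    if "p \<in> C" for p
    using heavy CV C atom_of_psubset_cluster[OF atoms clust nosplit C that u v vu] that by blast
  have bounds: "eps * wdeg V Ep Katoms p < real (card C) / 2"
    "real (card C) / 2 < wdeg V Ep Katoms p" if "p \<in> C" for p
    using heavy_degree_bounds[OF fin CV _ heavyC[OF that]] eps(1) by simp_all
  have CN: "C \<subseteq> N1 eps V Ep Katoms u \<inter> N1 eps V Ep Katoms v"
  proof
    fix p assume "p \<in> C"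
    then show "p \<in> N1 eps V Ep Katoms u \<inter> N1 eps V Ep Katoms v"
      using CV eps(1) bounds[OF \<open>p \<in> C\<close>] bounds[OF u] bounds[OF v]
      by (blast intro: N1_memI)
  qed
  have "eps * (wdeg V Ep Katoms u + wdeg V Ep Katoms v)
        < wset Ep Katoms u C + wset Ep Katoms v C - real (card C)"
    using heavyC[OF u] heavyC[OF v] by (simp add: algebra_simps)
  also have "\<dots> \<le> (\<Sum>p\<in>C. wgt Ep Katoms u p * wgt Ep Katoms v p)"
    using wset_add_wset_le_card_plus_common[of Ep Katoms u C v] by simp
  also have "\<dots> \<le> (\<Sum>p\<in>N1 eps V Ep Katoms u \<inter> N1 eps V Ep Katoms v.
                    wgt Ep Katoms u p * wgt Ep Katoms v p)"
    using CN fin by (intro sum_mono2) (auto simp: N1_def wgt_nonneg)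
  finally show ?thesis .
qed

end
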